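(* Let $Q$ be a countable weak-latin quandle and $c$ a circular order on $Q$. Then there is an injective quandle homomorphism $\rho:Q\hookrightarrow\mathrm{Conj}(\mathrm{Homeo}_+(S^1))$, i.e. an injective map with $\rho(r*s)=\rho(s)\circ\rho(r)\circ\rho(s)^{-1}$ for all $r,s\in Q$.
   Context: Quandle: set $Q$ with operation $*$ satisfying $q*q=q$, unique right division, and $(q*r)*s=(q*s)*(r*s)$. $Q$ is weak-latin if for any $q,r\in Q$ there exists $\hat q\in Q$ such that $\hat q*q=\hat q*r$ implies $q=r$. A circular order on $Q$ is $c:Q^3\to\{-1,0,1\}$ with: $c(q_1,q_2,q_3)=0$ iff two entries coincide; $c(q_2,q_3,q_4)-c(q_1,q_3,q_4)+c(q_1,q_2,q_4)-c(q_1,q_2,q_3)=0$; $c(q_1*q,q_2*q,q_3*q)=c(q_1,q_2,q_3)$. Homeomorphisms act on the right; $\mathrm{Conj}(\mathrm{Homeo}_+(S^1))$ is the quandle structure $f*g=g\circ f\circ g^{-1}$ on $\mathrm{Homeo}_+(S^1)$. *)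

theory Defs
  imports "HOL-Analysis.Analysis"
begin

definition quandle :: "'a set \<Rightarrow> ('a \<Rightarrow> 'a \<Rightarrow> 'a) \<Rightarrow> bool" where
  "quandle Q op \<longleftrightarrow>
     (\<forall>q\<in>Q. \<forall>r\<in>Q. op q r \<in> Q) \<and>
     (\<forall>q\<in>Q. op q q = q) \<and>
     (\<forall>q\<in>Q. \<forall>s\<in>Q. \<exists>!r. r \<in> Q \<and> op r s = q) \<and>
     (\<forall>q\<in>Q. \<forall>r\<in>Q. \<forall>s\<in>Q. op (op q r) s = op (op q s) (op r s))"

definition weak_latin :: "'a set \<Rightarrow> ('a \<Rightarrow> 'a \<Rightarrow> 'a) \<Rightarrow> bool" where
  "weak_latin Q op \<longleftrightarrow>
     (\<forall>q\<in>Q. \<forall>r\<in>Q. \<exists>qh\<in>Q. op qh q = op qh r \<longrightarrow> q = r)"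

definition circular_order :: "'a set \<Rightarrow> ('a \<Rightarrow> 'a \<Rightarrow> 'a) \<Rightarrow> ('a \<Rightarrow> 'a \<Rightarrow> 'a \<Rightarrow> int) \<Rightarrow> bool" where
  "circular_order Q op c \<longleftrightarrow>
     (\<forall>q1\<in>Q. \<forall>q2\<in>Q. \<forall>q3\<in>Q. c q1 q2 q3 \<in> {-1, 0, 1}) \<and>
     (\<forall>q1\<in>Q. \<forall>q2\<in>Q. \<forall>q3\<in>Q.
        (c q1 q2 q3 = 0 \<longleftrightarrow> (q1 = q2 \<or> q2 = q3 \<or> q1 = q3))) \<and>
     (\<forall>q1\<in>Q. \<forall>q2\<in>Q. \<forall>q3\<in>Q. \<forall>q4\<in>Q.
        c q2 q3 q4 - c q1 q3 q4 + c q1 q2 q4 - c q1 q2 q3 = 0) \<and>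
     (\<forall>q\<in>Q. \<forall>q1\<in>Q. \<forall>q2\<in>Q. \<forall>q3\<in>Q.
        c (op q1 q) (op q2 q) (op q3 q) = c q1 q2 q3)"

definition S1 :: "complex set" where
  "S1 = sphere 0 1"

text \<open>Standard (counterclockwise) circular order on S1: sign of the orientation
  of the triangle a b c (for points on the circle this is the cyclic order).\<close>
definition circle_orient :: "complex \<Rightarrow> complex \<Rightarrow> complex \<Rightarrow> real" where
  "circle_orient a b c = sgn (Im (cnj (b - a) * (c - a)))"

text \<open>Elements of Homeo_+(S1), represented as functions on the complex plane
  that are the identity off S1 (so that equality and composition are the
  ones of maps of S1).\<close>
definition homeo_plus :: "(complex \<Rightarrow> complex) \<Rightarrow> bool" where
  "homeo_plus f \<longleftrightarrow>
     (\<exists>g. homeomorphism S1 S1 f g) \<and>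
     (\<forall>a\<in>S1. \<forall>b\<in>S1. \<forall>c\<in>S1. circle_orient (f a) (f b) (f c) = circle_orient a b c) \<and>
     (\<forall>x. x \<notin> S1 \<longrightarrow> f x = x)"

definition hinv :: "(complex \<Rightarrow> complex) \<Rightarrow> complex \<Rightarrow> complex" where
  "hinv f = (\<lambda>x. if x \<in> S1 then inv_into S1 f x else x)"

end

theory Submission
  imports Defs
begin

text \<open>Cut the circular order at a base point q0 to obtain a linear order on Q, enumerate Q,
  and blow up each x \<in> Q to a half-open interval of length proportional to 2^-(n(x)+1),
  n the enumeration, laid out in this linear order inside [0,1). The blown-up points are
  dense in [0,1), and the cyclic order of three of them depends only on c, not on q0.
  Hence the right translation by s, an automorphism of (Q, c), acts on them preserving the
  cyclic order, and this action extends uniquely to a cyclic-order preserving bijection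
  of [0,1), i.e. to an orientation-preserving homeomorphism of the circle. Uniqueness turns
  right distributivity into the conjugation relation, and weak latinness makes the
  representation injective.\<close>

section \<open>Orientation of points on the circle\<close>

definition cyclic_sign :: "real \<Rightarrow> real \<Rightarrow> real \<Rightarrow> real" where
  "cyclic_sign a b c = sgn (b - a) * sgn (c - b) * sgn (c - a)"

definition circle_point :: "real \<Rightarrow> complex" where
  "circle_point t = cis (2 * pi * t)"

lemma sin_plus_sin_minus_sin_add:
  fixes x y :: real
  shows "sin x + sin y - sin (x + y) = 4 * sin (x/2) * sin (y/2) * sin ((x + y)/2)"
proof -
  define p where "p = x/2"
  define q where "q = y/2"
  have x: "x = 2*p" and y: "y = 2*q" by (simp_all add: p_def q_def)
  have s: "(x + y)/2 = p + q" by (simp add: p_def q_def add_divide_distrib)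
  have sin_x: "sin x = 2 * sin p * cos p" unfolding x by (simp add: sin_double)
  have sin_y: "sin y = 2 * sin q * cos q" unfolding y by (simp add: sin_double)
  have sin_xy: "sin (x + y) = 2 * sin p * cos p * (1 - 2 * sin q ^ 2)
      + (1 - 2 * sin p ^ 2) * (2 * sin q * cos q)"
    unfolding x y by (simp only: sin_add sin_double cos_double_sin)
  have "sin x + sin y - sin (x + y) = 4 * sin p * sin q * (sin p * cos q + cos p * sin q)"
    unfolding sin_x sin_y sin_xy by (simp add: algebra_simps power2_eq_square)
  also have "\<dots> = 4 * sin (x/2) * sin (y/2) * sin ((x + y)/2)"
    unfolding s by (simp add: p_def q_def sin_add)
  finally show ?thesis .
qed

lemma sgn_sin_pi_times:
  assumes "\<bar>t\<bar> < 1"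
  shows "sgn (sin (pi * t)) = sgn t"
proof -
  have "sin (pi * t) > 0" if "0 < t" "t < 1" for t
    using that by (intro sin_gt_zero) auto
  from this[of t] this[of "- t"] assms show ?thesis
    by (cases t "0::real" rule: linorder_cases) auto
qed

lemma circle_orient_circle_point:
  assumes "a \<in> {0..<1}" "b \<in> {0..<1}" "c \<in> {0..<1}"
  shows "circle_orient (circle_point a) (circle_point b) (circle_point c) = cyclic_sign a b c"
proof -
  have "Im (cnj (circle_point b - circle_point a) * (circle_point c - circle_point a))
      = sin (2*pi*(b-a)) + sin (2*pi*(c-b)) - sin (2*pi*(c-a))"
    by (simp add: circle_point_def right_diff_distrib sin_diff algebra_simps)
  also have "\<dots> = 4 * sin (pi*(b-a)) * sin (pi*(c-b)) * sin (pi*(c-a))"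
  proof -
    have "2*pi*(b-a) + 2*pi*(c-b) = 2*pi*(c-a)" by (simp add: algebra_simps)
    then show ?thesis using sin_plus_sin_minus_sin_add[of "2*pi*(b-a)" "2*pi*(c-b)"]
      by (simp add: mult.assoc)
  qed
  finally have "circle_orient (circle_point a) (circle_point b) (circle_point c) =
      sgn (sin (pi*(b-a))) * sgn (sin (pi*(c-b))) * sgn (sin (pi*(c-a)))"
    by (simp add: circle_orient_def sgn_mult)
  also have "\<dots> = cyclic_sign a b c"
    using assms by (simp add: cyclic_sign_def sgn_sin_pi_times abs_less_iff)
  finally show ?thesis .
qed

lemma circle_point_in_S1: "circle_point t \<in> S1"
  by (simp add: S1_def circle_point_def)

lemma inj_on_circle_point: "inj_on circle_point {0..<1}"
proof (rule inj_onI)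
  fix a b :: real
  assume a: "a \<in> {0..<1}" and b: "b \<in> {0..<1}" and eq: "circle_point a = circle_point b"
  then have "sin (2*pi*a) = sin (2*pi*b) \<and> cos (2*pi*a) = cos (2*pi*b)"
    by (simp add: circle_point_def complex_eq_iff)
  then obtain k :: int where "2*pi*a = 2*pi*b + 2*pi*real_of_int k"
    using sin_cos_eq_iff by blast
  then have "2*pi*a = 2*pi*(b + k)" by (simp add: algebra_simps)
  then have "a = b + k" by simp
  moreover have "\<bar>a - b\<bar> < 1" using a b by auto
  ultimately show "a = b" by simp
qed

lemma circle_point_image: "circle_point ` {0..<1} = S1"
proof
  show "circle_point ` {0..<1} \<subseteq> S1" using circle_point_in_S1 by auto
next
  show "S1 \<subseteq> circle_point ` {0..<1}"
  proof
    fix z assume "z \<in> S1"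
    then have "norm z = 1" "z \<noteq> 0" by (auto simp: S1_def)
    then have z: "z = cis (Arg z)" and Arg: "- pi < Arg z" "Arg z \<le> pi"
      using Arg_correct[of z] by (auto simp: sgn_div_norm)
    define t where "t = (if Arg z \<ge> 0 then Arg z / (2*pi) else Arg z / (2*pi) + 1)"
    have "t \<in> {0..<1}" using Arg by (auto simp: t_def field_simps)
    moreover have "cis (2 * pi * t) = cis (Arg z)"
    proof (cases "Arg z \<ge> 0")
      case False
      then have "2 * pi * t = Arg z + 2 * pi" by (simp add: t_def algebra_simps)
      then show ?thesis by (simp add: cis_mult[symmetric])
    qed (simp add: t_def)
    ultimately show "z \<in> circle_point ` {0..<1}"
      using z by (auto simp: circle_point_def)
  qed
qed

lemma orient_chord_formula:
  fixes y z :: complex and u v :: real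
  assumes "norm y = 1"
  shows "Im (cnj (z - y * Complex u (-v)) * (y * Complex u v - y * Complex u (-v)))
       = 2 * v * (Re (z * cnj y) - u)"
proof -
  have "Re y ^ 2 + Im y ^ 2 = 1" using assms by (simp add: cmod_def)
  then show ?thesis by (simp add: algebra_simps power2_eq_square) algebra
qed

lemma dist_unit_power2:
  fixes y z :: complex
  assumes "norm y = 1" "norm z = 1"
  shows "(dist z y)^2 = 2 - 2 * Re (z * cnj y)"
proof -
  have "Re y ^ 2 + Im y ^ 2 = 1" "Re z ^ 2 + Im z ^ 2 = 1"
    using assms by (simp_all add: cmod_def)
  moreover have "(dist z y)^2 = (Re z - Re y)^2 + (Im z - Im y)^2"
    by (simp add: dist_norm cmod_power2)
  ultimately show ?thesis by (simp add: algebra_simps power2_eq_square)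
qed

lemma short_arc_chord:
  assumes "norm y = 1" "0 < e" "e \<le> 1"
  obtains a b where "a \<in> S1" "b \<in> S1" "circle_orient a y b = 1"
    "\<And>z. z \<in> S1 \<Longrightarrow> circle_orient a z b = 1 \<Longrightarrow> dist z y < e"
proof -
  define u where "u = 1 - e^2/4"
  define v where "v = sqrt (1 - u^2)"
  have "e^2 \<le> 1" using assms by (simp add: power_le_one)
  then have u: "u < 1" "0 < u" using assms by (auto simp: u_def)
  then have "u^2 < 1" by (simp add: power_less_one_iff abs_less_iff)
  then have v: "0 < v" "u^2 + v^2 = 1" by (simp_all add: v_def)
  define a where "a = y * Complex u (-v)"
  define b where "b = y * Complex u v"
  have orient: "circle_orient a z b = sgn (2 * v * (Re (z * cnj y) - u))" for z
    by (simp only: circle_orient_def a_def b_def orient_chord_formula[OF assms(1)])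
  show thesis
  proof
    have "norm (Complex u (-v)) = 1" "norm (Complex u v) = 1"
      using v(2) by (simp_all add: cmod_def)
    then show "a \<in> S1" "b \<in> S1"
      using assms(1) by (simp_all add: a_def b_def S1_def norm_mult)
    have "Re (y * cnj y) = 1"
      using assms(1) cmod_power2[of y] by (simp add: complex_mult_cnj)
    then show "circle_orient a y b = 1" using orient u v by simp
  next
    fix z assume z: "z \<in> S1" "circle_orient a z b = 1"
    then have "Re (z * cnj y) > u"
      using orient[of z] v by (simp add: sgn_if zero_less_mult_iff split: if_splits)
    moreover have "(dist z y)^2 = 2 - 2 * Re (z * cnj y)"
      using z(1) assms(1) by (intro dist_unit_power2) (simp_all add: S1_def)
    moreover have "0 < e^2" using assms(2) by simp
    ultimately have "(dist z y)^2 < e^2" unfolding u_def by linarith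
    then show "dist z y < e" using assms(2) by (simp add: power2_less_imp_less)
  qed
qed

text \<open>The points strictly to the left of a chord form an open half-plane; an
  orientation-preserving bijection maps the arc cut out by the pulled-back chord
  onto a short arc around the image point.\<close>

lemma orientation_preserving_continuous:
  assumes bij: "bij_betw f S1 S1"
    and orient: "\<forall>a\<in>S1. \<forall>b\<in>S1. \<forall>c\<in>S1. circle_orient (f a) (f b) (f c) = circle_orient a b c"
  shows "continuous_on S1 f"
  unfolding continuous_on_iff
proof (intro ballI allI impI)
  fix p e assume p: "p \<in> S1" and e: "(0::real) < e"
  have fp: "norm (f p) = 1" using bij_betw_apply[OF bij p] by (simp add: S1_def)
  obtain a' b' where a'b': "a' \<in> S1" "b' \<in> S1" "circle_orient a' (f p) b' = 1"
    and near: "\<And>z. z \<in> S1 \<Longrightarrow> circle_orient a' z b' = 1 \<Longrightarrow> dist z (f p) < min e 1"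
    using short_arc_chord[OF fp, of "min e 1"] e by auto
  define a where "a = inv_into S1 f a'"
  define b where "b = inv_into S1 f b'"
  have ab: "a \<in> S1" "b \<in> S1" "f a = a'" "f b = b'"
    using a'b' bij bij_betw_inv_into_right[OF bij]
    by (auto simp: a_def b_def bij_betw_def inv_into_into)
  define U where "U = {z. 0 < Im (cnj (z - a) * (b - a))}"
  have "U = {z. 0 < (Re z - Re a) * Im (b - a) - (Im z - Im a) * Re (b - a)}"
    unfolding U_def by (simp add: algebra_simps)
  then have "open U" by (simp only:) (intro open_Collect_less continuous_intros)
  have U_iff: "z \<in> U \<longleftrightarrow> circle_orient a' (f z) b' = 1" if "z \<in> S1" for z
    using orient[rule_format, OF ab(1) that ab(2)] ab
    by (simp add: U_def circle_orient_def sgn_if)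
  then have "p \<in> U" using p a'b' by simp
  then obtain d where d: "0 < d" "ball p d \<subseteq> U" using \<open>open U\<close> open_contains_ball by blast
  show "\<exists>d>0. \<forall>x\<in>S1. dist x p < d \<longrightarrow> dist (f x) (f p) < e"
  proof (intro exI conjI ballI impI)
    fix x assume "x \<in> S1" "dist x p < d"
    then have "circle_orient a' (f x) b' = 1" using d U_iff by (auto simp: dist_commute)
    then show "dist (f x) (f p) < e" using near bij_betw_apply[OF bij \<open>x \<in> S1\<close>] by force
  qed fact
qed

lemma orientation_preserving_homeomorphism:
  assumes "bij_betw f S1 S1"
    and "\<forall>a\<in>S1. \<forall>b\<in>S1. \<forall>c\<in>S1. circle_orient (f a) (f b) (f c) = circle_orient a b c"
  shows "\<exists>g. homeomorphism S1 S1 f g"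
  using homeomorphism_compact[of S1 f S1] orientation_preserving_continuous[OF assms] assms(1)
  by (simp add: S1_def bij_betw_def)

section \<open>Cyclic-order preserving bijections of [0,1)\<close>

definition dense_in_unit :: "real set \<Rightarrow> bool" where
  "dense_in_unit D \<longleftrightarrow> (\<forall>a b. 0 \<le> a \<and> a < b \<and> b \<le> 1 \<longrightarrow> (\<exists>d\<in>D. a < d \<and> d < b))"

definition cyclic_preserving :: "(real \<Rightarrow> real) \<Rightarrow> real set \<Rightarrow> bool" where
  "cyclic_preserving f A \<longleftrightarrow>
     (\<forall>a\<in>A. \<forall>b\<in>A. \<forall>c\<in>A. cyclic_sign (f a) (f b) (f c) = cyclic_sign a b c)"

lemma dense_in_unitD:
  "dense_in_unit D \<Longrightarrow> 0 \<le> a \<Longrightarrow> a < b \<Longrightarrow> b \<le> 1 \<Longrightarrow> \<exists>d\<in>D. a < d \<and> d < b"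
  unfolding dense_in_unit_def by blast

definition sup_extension :: "(real \<Rightarrow> real) \<Rightarrow> real set \<Rightarrow> real \<Rightarrow> real" where
  "sup_extension \<psi> D u = Sup (\<psi> ` {d\<in>D. d \<le> u})"

context
  fixes D D' :: "real set" and \<psi> :: "real \<Rightarrow> real"
  assumes D_sub: "D \<subseteq> {0..<1}" and D'_sub: "D' \<subseteq> {0..<1}" and D_0: "0 \<in> D" and D'_0: "0 \<in> D'"
    and D_dense: "dense_in_unit D" and D'_dense: "dense_in_unit D'"
    and \<psi>_bij: "bij_betw \<psi> D D'"
    and \<psi>_mono: "\<And>x y. x \<in> D \<Longrightarrow> y \<in> D \<Longrightarrow> x < y \<Longrightarrow> \<psi> x < \<psi> y"
begin

private abbreviation "h \<equiv> sup_extension \<psi> D"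

private lemma \<psi>_range: "d \<in> D \<Longrightarrow> \<psi> d \<in> {0..<1}"
  using \<psi>_bij D'_sub by (auto simp: bij_betw_def)

private lemma \<psi>_reflect: "x \<in> D \<Longrightarrow> y \<in> D \<Longrightarrow> \<psi> x < \<psi> y \<Longrightarrow> x < y"
  using \<psi>_mono[of y x] by (cases "x = y") force+

private lemma \<psi>_surj: "v \<in> D' \<Longrightarrow> \<exists>d\<in>D. \<psi> d = v"
  using \<psi>_bij by (auto simp: bij_betw_def)

private lemma \<psi>_0: "\<psi> 0 = 0"
proof -
  obtain d0 where "d0 \<in> D" "\<psi> d0 = 0" using \<psi>_surj[OF D'_0] by blast
  then show ?thesis
    using \<psi>_reflect[OF \<open>d0 \<in> D\<close> D_0] \<psi>_range[OF D_0] D_sub by force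
qed

private lemma h_upper: "d \<in> D \<Longrightarrow> d \<le> u \<Longrightarrow> \<psi> d \<le> h u"
  unfolding sup_extension_def using \<psi>_range
  by (intro cSup_upper bdd_aboveI[of _ 1]) (auto intro: less_imp_le)

private lemma h_least: "0 \<le> u \<Longrightarrow> (\<And>d. d \<in> D \<Longrightarrow> d \<le> u \<Longrightarrow> \<psi> d \<le> M) \<Longrightarrow> h u \<le> M"
  unfolding sup_extension_def using D_0 by (intro cSup_least) auto

private lemma h_extends: "d \<in> D \<Longrightarrow> h d = \<psi> d"
  using h_upper[of d d] h_least[of d "\<psi> d"] \<psi>_mono D_sub
  by (force intro: antisym simp: less_eq_real_def)

private lemma h_strict_mono: "x \<in> {0..<1} \<Longrightarrow> y \<in> {0..<1} \<Longrightarrow> x < y \<Longrightarrow> h x < h y"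
proof -
  assume xy: "x \<in> {0..<1}" "y \<in> {0..<1}" "x < y"
  obtain d1 where d1: "d1 \<in> D" "x < d1" "d1 < y" using dense_in_unitD[OF D_dense, of x y] xy by auto
  obtain d2 where d2: "d2 \<in> D" "d1 < d2" "d2 < y" using dense_in_unitD[OF D_dense, of d1 y] xy d1 by auto
  have "h x \<le> \<psi> d1" using xy d1 by (intro h_least) (auto intro!: less_imp_le \<psi>_mono)
  also have "\<psi> d1 < \<psi> d2" using \<psi>_mono d1 d2 by auto
  also have "\<psi> d2 \<le> h y" using h_upper d2 by auto
  finally show ?thesis .
qed

private lemma h_range: "u \<in> {0..<1} \<Longrightarrow> h u \<in> {0..<1}"
proof -
  assume u: "u \<in> {0..<1}"
  obtain d where d: "d \<in> D" "u < d" "d < 1" using dense_in_unitD[OF D_dense, of u 1] u by auto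
  then have "h u \<le> \<psi> d" using u by (intro h_least) (auto intro!: less_imp_le \<psi>_mono)
  moreover have "0 \<le> h u" using h_upper[OF D_0, of u] u \<psi>_0 by simp
  ultimately show ?thesis using \<psi>_range[OF d(1)] by simp
qed

text \<open>The preimage of v is the supremum of the points of D that \<psi> maps to at most v;
  density of D' rules out a jump of h across v in either direction.\<close>

private lemma h_surj: "v \<in> {0..<1} \<Longrightarrow> \<exists>u\<in>{0..<1}. h u = v"
proof -
  assume v: "v \<in> {0..<1}"
  define T where "T = {d\<in>D. \<psi> d \<le> v}"
  have T_0: "0 \<in> T" using D_0 \<psi>_0 v by (simp add: T_def)
  have T_below: "t < e" if "t \<in> T" "e \<in> D" "v < \<psi> e" for t e
    using that \<psi>_reflect[of t e] by (auto simp: T_def)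
  obtain d' where "d' \<in> D'" "v < d'" using dense_in_unitD[OF D'_dense, of v 1] v by auto
  then obtain ds where ds: "ds \<in> D" "v < \<psi> ds" using \<psi>_surj by blast
  have "bdd_above T" using T_below[OF _ ds] by (auto intro!: bdd_aboveI[of _ ds] less_imp_le)
  define u where "u = Sup T"
  have u_upper: "t \<le> u" if "t \<in> T" for t unfolding u_def using that \<open>bdd_above T\<close> by (intro cSup_upper)
  have u_least: "u \<le> e" if "e \<in> D" "v < \<psi> e" for e
    unfolding u_def using T_0 T_below[OF _ that] by (intro cSup_least) (auto intro: less_imp_le)
  have u: "u \<in> {0..<1}" using u_upper[OF T_0] u_least[OF ds] ds D_sub by auto
  have "h u \<le> v"
  proof (rule h_least)
    fix d assume d: "d \<in> D" "d \<le> u"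
    show "\<psi> d \<le> v"
    proof (rule ccontr)
      assume "\<not> \<psi> d \<le> v"
      then obtain d' where "d' \<in> D'" "v < d'" "d' < \<psi> d"
        using dense_in_unitD[OF D'_dense, of v "\<psi> d"] v \<psi>_range[OF d(1)] by auto
      then obtain e where e: "e \<in> D" "v < \<psi> e" "\<psi> e < \<psi> d" using \<psi>_surj by blast
      then show False using \<psi>_reflect[OF e(1) d(1)] u_least[OF e(1,2)] d by simp
    qed
  qed (use u in simp)
  moreover have "v \<le> h u"
  proof (rule ccontr)
    assume "\<not> v \<le> h u"
    then obtain d' where "d' \<in> D'" "h u < d'" "d' < v"
      using dense_in_unitD[OF D'_dense, of "h u" v] v h_range[OF u] by auto
    then obtain e where e: "e \<in> D" "h u < \<psi> e" "\<psi> e \<le> v" using \<psi>_surj by force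
    then show False using h_upper[OF e(1) u_upper] by (simp add: T_def)
  qed
  ultimately show ?thesis using u by auto
qed

lemma strict_mono_extension:
  obtains h where "bij_betw h {0..<1} {0..<1}"
    "\<And>x y. x \<in> {0..<1} \<Longrightarrow> y \<in> {0..<1} \<Longrightarrow> x < y \<Longrightarrow> h x < h y"
    "\<And>d. d \<in> D \<Longrightarrow> h d = \<psi> d"
proof
  show "bij_betw h {0..<1} {0..<1}"
    unfolding bij_betw_def
  proof
    show "inj_on h {0..<1}"
      by (rule inj_onI) (metis h_strict_mono less_irrefl linorder_neqE_linordered_idom)
    show "h ` {0..<1} = {0..<1}" using h_range h_surj by blast
  qed
qed (use h_strict_mono h_extends in auto)

end

definition rotate_by :: "real \<Rightarrow> real \<Rightarrow> real" where
  "rotate_by c x = (if x + c < 1 then x + c else x + c - 1)"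

definition unrotate_by :: "real \<Rightarrow> real \<Rightarrow> real" where
  "unrotate_by c x = (if c \<le> x then x - c else x - c + 1)"

lemma rotate_by_cyclic_sign:
  assumes "c \<in> {0..<1}" "x \<in> {0..<1}" "y \<in> {0..<1}" "z \<in> {0..<1}"
  shows "cyclic_sign (rotate_by c x) (rotate_by c y) (rotate_by c z) = cyclic_sign x y z"
  using assms unfolding cyclic_sign_def rotate_by_def by (auto simp: sgn_if)

lemma unrotate_by_range: "c \<in> {0..<1} \<Longrightarrow> x \<in> {0..<1} \<Longrightarrow> unrotate_by c x \<in> {0..<1}"
  by (auto simp: unrotate_by_def)

lemma rotate_by_unrotate_by: "c \<in> {0..<1} \<Longrightarrow> x \<in> {0..<1} \<Longrightarrow> rotate_by c (unrotate_by c x) = x"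
  by (auto simp: unrotate_by_def rotate_by_def)

lemma bij_betw_rotate_by: "c \<in> {0..<1} \<Longrightarrow> bij_betw (rotate_by c) {0..<1} {0..<1}"
  by (rule bij_betw_byWitness[of _ "unrotate_by c"]) (auto simp: rotate_by_def unrotate_by_def)

lemma inj_on_unrotate_by: "c \<in> {0..<1} \<Longrightarrow> inj_on (unrotate_by c) {0..<1}"
  by (metis inj_onI rotate_by_unrotate_by)

lemma unrotate_by_cyclic_sign:
  assumes "c \<in> {0..<1}" "x \<in> {0..<1}" "y \<in> {0..<1}" "z \<in> {0..<1}"
  shows "cyclic_sign (unrotate_by c x) (unrotate_by c y) (unrotate_by c z) = cyclic_sign x y z"
  using rotate_by_cyclic_sign[of c "unrotate_by c x" "unrotate_by c y" "unrotate_by c z"] assms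
  by (simp add: unrotate_by_range rotate_by_unrotate_by del: atLeastLessThan_iff)

lemma dense_in_unit_unrotate_by:
  assumes c: "c \<in> {0..<1}" and D: "D \<subseteq> {0..<1}" "dense_in_unit D"
  shows "dense_in_unit (unrotate_by c ` D)"
  unfolding dense_in_unit_def
proof (intro allI impI)
  fix a b :: real assume ab: "0 \<le> a \<and> a < b \<and> b \<le> 1"
  obtain d where d: "d \<in> D" "a < unrotate_by c d" "unrotate_by c d < b"
  proof (cases "a + c < 1")
    case True
    then obtain d where "d \<in> D" "a + c < d" "d < min (b + c) 1"
      using dense_in_unitD[OF D(2), of "a + c" "min (b + c) 1"] ab c by auto
    then show thesis using that ab by (auto simp: unrotate_by_def)
  next
    case False
    then obtain d where "d \<in> D" "a + c - 1 < d" "d < b + c - 1"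
      using dense_in_unitD[OF D(2), of "a + c - 1" "b + c - 1"] ab c by auto
    then show thesis using that ab c by (auto simp: unrotate_by_def)
  qed
  then show "\<exists>d\<in>unrotate_by c ` D. a < d \<and> d < b" by blast
qed

lemma strict_mono_imp_cyclic_preserving:
  assumes "\<And>x y. x \<in> A \<Longrightarrow> y \<in> A \<Longrightarrow> x < y \<Longrightarrow> h x < h y"
  shows "cyclic_preserving h A"
proof -
  have "sgn (h y - h x) = sgn (y - x)" if "x \<in> A" "y \<in> A" for x y
    using assms[of x y] assms[of y x] that by (cases x y rule: linorder_cases) (auto simp: sgn_if)
  then show ?thesis by (simp add: cyclic_preserving_def cyclic_sign_def)
qed

text \<open>Seen from the fixed point 0, the cyclic order on [0,1) is the linear order.\<close>

lemma cyclic_preserving_fix_0_strict_mono: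
  assumes "cyclic_preserving \<psi> A" "inj_on \<psi> A" "A \<subseteq> {0..<1}" "\<psi> ` A \<subseteq> {0..<1}"
    and "0 \<in> A" "\<psi> 0 = 0" "x \<in> A" "y \<in> A" "x < y"
  shows "\<psi> x < \<psi> y"
proof (cases "x = 0")
  case True
  then have "\<psi> y \<noteq> 0" using assms by (metis inj_on_eq_iff less_irrefl)
  then show ?thesis using True assms by fastforce
next
  case False
  then have "cyclic_sign 0 x y = 1" using assms by (force simp: cyclic_sign_def)
  then have "cyclic_sign 0 (\<psi> x) (\<psi> y) = 1"
    using assms unfolding cyclic_preserving_def by metis
  then show ?thesis using assms by (auto simp: cyclic_sign_def sgn_if split: if_splits)
qed

text \<open>Rotate the image of 0 back to 0, extend the resulting monotone map, and rotate again.\<close>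

lemma cyclic_extension_exists:
  assumes D: "D \<subseteq> {0..<1}" "0 \<in> D" "dense_in_unit D"
    and \<phi>: "bij_betw \<phi> D D" "cyclic_preserving \<phi> D"
  obtains f where "bij_betw f {0..<1} {0..<1}" "cyclic_preserving f {0..<1}" "\<And>d. d \<in> D \<Longrightarrow> f d = \<phi> d"
proof -
  define c where "c = \<phi> 0"
  have c: "c \<in> {0..<1}" using bij_betw_apply[OF \<phi>(1) D(2)] D(1) by (auto simp: c_def)
  define \<psi> where "\<psi> = unrotate_by c \<circ> \<phi>"
  have \<phi>_range: "\<phi> d \<in> {0..<1}" if "d \<in> D" for d using bij_betw_apply[OF \<phi>(1) that] D(1) by auto
  have \<psi>_bij: "bij_betw \<psi> D (unrotate_by c ` D)"
    unfolding \<psi>_def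
    by (rule bij_betw_trans[OF \<phi>(1) inj_on_imp_bij_betw[OF inj_on_subset[OF inj_on_unrotate_by[OF c] D(1)]]])
  have "cyclic_preserving \<psi> D"
    using \<phi>(2) unrotate_by_cyclic_sign[OF c] \<phi>_range by (simp add: cyclic_preserving_def \<psi>_def)
  moreover have "\<psi> 0 = 0" by (simp add: \<psi>_def c_def unrotate_by_def)
  moreover have "\<psi> ` D \<subseteq> {0..<1}" using \<phi>_range unrotate_by_range[OF c] by (auto simp: \<psi>_def)
  ultimately have \<psi>_mono: "\<psi> x < \<psi> y" if "x \<in> D" "y \<in> D" "x < y" for x y
    using cyclic_preserving_fix_0_strict_mono[of \<psi> D x y] \<psi>_bij D that by (auto simp: bij_betw_def)
  have D': "unrotate_by c ` D \<subseteq> {0..<1}" "0 \<in> unrotate_by c ` D"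
    using D unrotate_by_range[OF c] \<psi>_bij \<open>\<psi> 0 = 0\<close> by (auto simp: bij_betw_def)
  obtain h where h: "bij_betw h {0..<1} {0..<1}" "\<And>x y. x \<in> {0..<1} \<Longrightarrow> y \<in> {0..<1} \<Longrightarrow> x < y \<Longrightarrow> h x < h y"
      "\<And>d. d \<in> D \<Longrightarrow> h d = \<psi> d"
    using strict_mono_extension[OF D(1) D'(1) D(2) D'(2) D(3) dense_in_unit_unrotate_by[OF c D(1,3)] \<psi>_bij \<psi>_mono]
    by blast
  show thesis
  proof
    show "bij_betw (rotate_by c \<circ> h) {0..<1} {0..<1}" by (rule bij_betw_trans[OF h(1) bij_betw_rotate_by[OF c]])
    have "cyclic_preserving h {0..<1}" using h(2) by (rule strict_mono_imp_cyclic_preserving)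
    then show "cyclic_preserving (rotate_by c \<circ> h) {0..<1}"
      using rotate_by_cyclic_sign[OF c] bij_betw_apply[OF h(1)]
      unfolding cyclic_preserving_def by simp
    show "(rotate_by c \<circ> h) d = \<phi> d" if "d \<in> D" for d
      using that h(3) rotate_by_unrotate_by[OF c \<phi>_range] by (simp add: \<psi>_def)
  qed
qed

lemma dense_in_unit_separates:
  assumes "dense_in_unit D" "v1 \<in> {0..<1}" "v2 \<in> {0..<1}" "v1 \<noteq> v2"
  obtains d1 d2 where "d1 \<in> D" "d2 \<in> D" "cyclic_sign v1 d1 d2 = 1" "cyclic_sign v2 d1 d2 = -1"
proof (cases "v1 < v2")
  case True
  obtain d1 where "d1 \<in> D" "v1 < d1" "d1 < v2" using dense_in_unitD[OF assms(1), of v1 v2] assms True by auto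
  moreover obtain d2 where "d2 \<in> D" "v2 < d2" "d2 < 1" using dense_in_unitD[OF assms(1), of v2 1] assms by auto
  ultimately show thesis using that True by (simp add: cyclic_sign_def)
next
  case False
  then have "v2 < v1" using assms by simp
  obtain d1 where "d1 \<in> D" "v1 < d1" "d1 < 1" using dense_in_unitD[OF assms(1), of v1 1] assms by auto
  moreover obtain d2 where "d2 \<in> D" "v2 < d2" "d2 < v1" using dense_in_unitD[OF assms(1), of v2 v1] assms \<open>v2 < v1\<close> by auto
  ultimately show thesis using that \<open>v2 < v1\<close> by (simp add: cyclic_sign_def)
qed

lemma cyclic_extension_unique:
  assumes D: "D \<subseteq> {0..<1}" "dense_in_unit D"
    and f1: "bij_betw f1 {0..<1} {0..<1}" "cyclic_preserving f1 {0..<1}" "f1 ` D = D"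
    and f2: "bij_betw f2 {0..<1} {0..<1}" "cyclic_preserving f2 {0..<1}"
    and agree: "\<And>d. d \<in> D \<Longrightarrow> f1 d = f2 d"
    and u: "u \<in> {0..<1}"
  shows "f1 u = f2 u"
proof (rule ccontr)
  assume "f1 u \<noteq> f2 u"
  then obtain d1 d2 where d: "d1 \<in> D" "d2 \<in> D" "cyclic_sign (f1 u) d1 d2 = 1" "cyclic_sign (f2 u) d1 d2 = -1"
    using dense_in_unit_separates[OF D(2)] bij_betw_apply[OF f1(1) u] bij_betw_apply[OF f2(1) u] by metis
  then obtain e1 e2 where e: "e1 \<in> D" "e2 \<in> D" "f1 e1 = d1" "f1 e2 = d2" using f1(3) by (metis imageE)
  then have "e1 \<in> {0..<1}" "e2 \<in> {0..<1}" using D(1) by auto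
  then have "cyclic_sign (f1 u) d1 d2 = cyclic_sign (f2 u) d1 d2"
    using f1(2) f2(2) u e agree unfolding cyclic_preserving_def by metis
  then show False using d by simp
qed

lemma cyclic_preserving_comp:
  "cyclic_preserving f A \<Longrightarrow> cyclic_preserving g A \<Longrightarrow> g ` A \<subseteq> A \<Longrightarrow> cyclic_preserving (f \<circ> g) A"
  by (simp add: cyclic_preserving_def image_subset_iff)

section \<open>Transport from [0,1) to the circle\<close>

definition circle_angle :: "complex \<Rightarrow> real" where
  "circle_angle = inv_into {0..<1} circle_point"

lemma circle_angle_range: "z \<in> S1 \<Longrightarrow> circle_angle z \<in> {0..<1}"
  unfolding circle_angle_def using circle_point_image by (metis inv_into_into)

lemma circle_point_circle_angle: "z \<in> S1 \<Longrightarrow> circle_point (circle_angle z) = z"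
  unfolding circle_angle_def using circle_point_image by (metis f_inv_into_f)

lemma circle_angle_circle_point: "t \<in> {0..<1} \<Longrightarrow> circle_angle (circle_point t) = t"
  unfolding circle_angle_def using inj_on_circle_point by (metis inv_into_f_f)

definition circle_map :: "(real \<Rightarrow> real) \<Rightarrow> complex \<Rightarrow> complex" where
  "circle_map f z = (if z \<in> S1 then circle_point (f (circle_angle z)) else z)"

lemma circle_map_comp:
  "g ` {0..<1} \<subseteq> {0..<1} \<Longrightarrow> circle_map f \<circ> circle_map g = circle_map (f \<circ> g)"
  using circle_point_in_S1 circle_angle_circle_point circle_angle_range
  by (auto simp: circle_map_def fun_eq_iff image_subset_iff)

lemma circle_map_cong: "(\<And>u. u \<in> {0..<1} \<Longrightarrow> f u = g u) \<Longrightarrow> circle_map f = circle_map g"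
  using circle_angle_range by (auto simp: circle_map_def fun_eq_iff)

lemma circle_map_id_on: "(\<And>u. u \<in> {0..<1} \<Longrightarrow> f u = u) \<Longrightarrow> circle_map f = id"
  using circle_angle_range circle_point_circle_angle by (auto simp: circle_map_def fun_eq_iff)

lemma circle_map_eqD:
  assumes "circle_map f = circle_map g" "f ` {0..<1} \<subseteq> {0..<1}" "g ` {0..<1} \<subseteq> {0..<1}"
    and "u \<in> {0..<1}"
  shows "f u = g u"
proof -
  have "circle_point (f u) = circle_point (g u)"
    using fun_cong[OF assms(1), of "circle_point u"] circle_point_in_S1 circle_angle_circle_point assms(4)
    by (simp add: circle_map_def)
  moreover have "f u \<in> {0..<1}" "g u \<in> {0..<1}" using assms(2-4) by blast+
  ultimately show ?thesis using inj_on_circle_point by (auto dest: inj_onD)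
qed

lemma circle_map_inverse:
  assumes "bij_betw f {0..<1} {0..<1}"
  shows "circle_map (inv_into {0..<1} f) \<circ> circle_map f = id"
    and "circle_map f \<circ> circle_map (inv_into {0..<1} f) = id"
proof -
  have "f ` {0..<1} \<subseteq> {0..<1}" "inv_into {0..<1} f ` {0..<1} \<subseteq> {0..<1}"
    using assms bij_betw_inv_into[OF assms] by (simp_all add: bij_betw_def)
  then show "circle_map (inv_into {0..<1} f) \<circ> circle_map f = id"
    and "circle_map f \<circ> circle_map (inv_into {0..<1} f) = id"
    using assms by (simp_all add: circle_map_comp circle_map_id_on bij_betw_inv_into_left
        bij_betw_inv_into_right del: atLeastLessThan_iff)
qed

lemma bij_betw_circle_map:
  assumes "bij_betw f {0..<1} {0..<1}"
  shows "bij_betw (circle_map f) S1 S1"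
proof (rule bij_betw_byWitness[of _ "circle_map (inv_into {0..<1} f)"])
  show "\<forall>z\<in>S1. circle_map (inv_into {0..<1} f) (circle_map f z) = z"
    "\<forall>z\<in>S1. circle_map f (circle_map (inv_into {0..<1} f) z) = z"
    using circle_map_inverse[OF assms] by (simp_all add: fun_eq_iff)
qed (auto simp: circle_map_def circle_point_in_S1)

lemma hinv_circle_map:
  assumes "bij_betw f {0..<1} {0..<1}"
  shows "hinv (circle_map f) = circle_map (inv_into {0..<1} f)"
proof
  fix z
  have "inv_into S1 (circle_map f) z = circle_map (inv_into {0..<1} f) z" if "z \<in> S1"
  proof (rule inv_into_f_eq)
    show "inj_on (circle_map f) S1" using bij_betw_circle_map[OF assms] by (simp add: bij_betw_def)
    show "circle_map (inv_into {0..<1} f) z \<in> S1"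
      using that by (simp add: circle_map_def circle_point_in_S1)
    show "circle_map f (circle_map (inv_into {0..<1} f) z) = z"
      using fun_cong[OF circle_map_inverse(2)[OF assms], of z] by simp
  qed
  then show "hinv (circle_map f) z = circle_map (inv_into {0..<1} f) z"
    by (simp add: hinv_def circle_map_def)
qed

lemma homeo_plus_circle_map:
  assumes "bij_betw f {0..<1} {0..<1}" "cyclic_preserving f {0..<1}"
  shows "homeo_plus (circle_map f)"
proof -
  have "circle_orient (circle_map f a) (circle_map f b) (circle_map f d) = circle_orient a b d"
    if "a \<in> S1" "b \<in> S1" "d \<in> S1" for a b d
  proof -
    have angles: "circle_angle a \<in> {0..<1}" "circle_angle b \<in> {0..<1}" "circle_angle d \<in> {0..<1}"
      using that circle_angle_range by auto
    then have "circle_orient (circle_map f a) (circle_map f b) (circle_map f d)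
        = cyclic_sign (circle_angle a) (circle_angle b) (circle_angle d)"
      using that assms bij_betw_apply[OF assms(1)]
      by (simp add: circle_map_def circle_orient_circle_point cyclic_preserving_def)
    also have "\<dots> = circle_orient a b d"
      using angles that by (simp add: circle_orient_circle_point[symmetric] circle_point_circle_angle)
    finally show ?thesis .
  qed
  then show ?thesis
    unfolding homeo_plus_def
    using orientation_preserving_homeomorphism bij_betw_circle_map[OF assms(1)]
    by (auto simp: circle_map_def)
qed

section \<open>Blowing up a countable circularly ordered set\<close>

lemma summable_half_powers: "summable (\<lambda>n. (1/2::real)^Suc n)"
  using complete_algebra_summable_geometric[of "1/2::real"] by (simp add: summable_mult)

lemma suminf_half_powers: "(\<Sum>n. (1/2::real)^Suc n) = 1"
proof -
  have "(\<Sum>n. (1/2::real)^Suc n) = (\<Sum>n. (1/2) * (1/2::real)^n)" by simp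
  also have "\<dots> = (1/2) * (\<Sum>n. (1/2::real)^n)"
    using complete_algebra_summable_geometric[of "1/2::real"] by (intro suminf_mult) simp
  also have "\<dots> = 1" using suminf_geometric[of "1/2::real"] by simp
  finally show ?thesis .
qed

locale enumerated_set =
  fixes Q :: "'a set" and e :: "'a \<Rightarrow> nat"
  assumes inj_e: "inj_on e Q"
begin

definition mass_seq :: "'a set \<Rightarrow> nat \<Rightarrow> real" where
  "mass_seq S n = (if n \<in> e ` S then (1/2)^Suc n else 0)"

definition mass :: "'a set \<Rightarrow> real" where
  "mass S = (\<Sum>n. mass_seq S n)"

lemma mass_seq_nonneg: "0 \<le> mass_seq S n"
  by (simp add: mass_seq_def)

lemma summable_mass_seq: "summable (mass_seq S)"
  by (rule summable_comparison_test'[OF summable_half_powers, of 0]) (simp add: mass_seq_def)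

lemma mass_nonneg: "0 \<le> mass S"
  unfolding mass_def by (intro suminf_nonneg summable_mass_seq mass_seq_nonneg)

lemma mass_mono: "S \<subseteq> T \<Longrightarrow> mass S \<le> mass T"
  unfolding mass_def by (intro suminf_le summable_mass_seq) (auto simp: mass_seq_def)

lemma mass_empty [simp]: "mass {} = 0"
  by (simp add: mass_def mass_seq_def)

lemma mass_pos: "x \<in> S \<Longrightarrow> 0 < mass S"
  unfolding mass_def
  by (rule suminf_pos2[OF summable_mass_seq, of _ "e x"]) (auto simp: mass_seq_nonneg mass_seq_def)

lemma mass_Un_disjoint:
  assumes "S \<subseteq> Q" "T \<subseteq> Q" "S \<inter> T = {}"
  shows "mass (S \<union> T) = mass S + mass T"
proof -
  have "e ` S \<inter> e ` T = {}" using inj_e assms by (auto dest: inj_onD)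
  then have "mass_seq (S \<union> T) = (\<lambda>n. mass_seq S n + mass_seq T n)"
    by (auto simp: mass_seq_def image_Un fun_eq_iff)
  then show ?thesis unfolding mass_def
    by (simp add: suminf_add[OF summable_mass_seq summable_mass_seq])
qed

lemma mass_singleton: "mass {x} = (1/2)^Suc (e x)"
proof -
  have "mass_seq {x} = (\<lambda>n. if n = e x then (1/2)^Suc n else 0)"
    by (auto simp: mass_seq_def fun_eq_iff)
  then show ?thesis
    unfolding mass_def using sums_single[of "e x" "\<lambda>n. (1/2::real)^Suc n"] by (simp add: sums_iff)
qed

lemma mass_le_of_index_ge:
  assumes "\<And>x. x \<in> S \<Longrightarrow> N \<le> e x"
  shows "mass S \<le> (1/2)^N"
proof -
  have "sum (mass_seq S) {..<N} = 0" using assms by (force simp: mass_seq_def intro!: sum.neutral)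
  then have "mass S = (\<Sum>n. mass_seq S (n + N))"
    unfolding mass_def using suminf_split_initial_segment[OF summable_mass_seq, of S N] by simp
  also have "\<dots> \<le> (\<Sum>n. (1/2)^N * (1/2::real)^Suc n)"
  proof (rule suminf_le)
    show "mass_seq S (n + N) \<le> (1/2)^N * (1/2)^Suc n" for n
      by (simp add: mass_seq_def power_add[symmetric])
    show "summable (\<lambda>n. mass_seq S (n + N))"
      using summable_mass_seq summable_iff_shift by blast
    show "summable (\<lambda>n. (1/2)^N * (1/2::real)^Suc n)"
      using summable_half_powers by (rule summable_mult)
  qed
  also have "\<dots> = (1/2)^N"
    using suminf_mult[OF summable_half_powers, of "(1/2)^N"] suminf_half_powers by simp
  finally show ?thesis .
qed

lemma finite_index_less:
  assumes "S \<subseteq> Q"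
  shows "finite {x\<in>S. e x < M}"
proof (rule finite_imageD)
  show "finite (e ` {x\<in>S. e x < M})" by (rule finite_subset[of _ "{..<M}"]) auto
  show "inj_on e {x\<in>S. e x < M}" using inj_e assms by (auto intro: inj_on_subset)
qed

lemma mass_le_of_index_less:
  assumes "S \<subseteq> Q" "\<And>M. mass {x\<in>S. e x < M} \<le> a"
  shows "mass S \<le> a"
proof -
  have "sum (mass_seq S) {..<M} = mass {x\<in>S. e x < M}" for M
  proof -
    have "mass {x\<in>S. e x < M} = sum (mass_seq {x\<in>S. e x < M}) {..<M}"
      unfolding mass_def by (intro suminf_finite) (auto simp: mass_seq_def)
    also have "\<dots> = sum (mass_seq S) {..<M}" by (intro sum.cong) (auto simp: mass_seq_def)
    finally show ?thesis by simp
  qed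
  then show ?thesis
    unfolding mass_def[of S] using assms(2) by (intro suminf_le_const summable_mass_seq) simp
qed

end

locale pointed_circular_order =
  fixes Q :: "'a set" and c :: "'a \<Rightarrow> 'a \<Rightarrow> 'a \<Rightarrow> int" and q0 :: 'a
  assumes countable_Q: "countable Q" and q0_in_Q: "q0 \<in> Q"
    and c_values: "\<forall>q1\<in>Q. \<forall>q2\<in>Q. \<forall>q3\<in>Q. c q1 q2 q3 \<in> {-1, 0, 1}"
    and c_eq_0_iff: "\<forall>q1\<in>Q. \<forall>q2\<in>Q. \<forall>q3\<in>Q. (c q1 q2 q3 = 0 \<longleftrightarrow> (q1 = q2 \<or> q2 = q3 \<or> q1 = q3))"
    and c_cocycle: "\<forall>q1\<in>Q. \<forall>q2\<in>Q. \<forall>q3\<in>Q. \<forall>q4\<in>Q.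
      c q2 q3 q4 - c q1 q3 q4 + c q1 q2 q4 - c q1 q2 q3 = 0"
begin

sublocale enumerated_set Q "to_nat_on Q"
  by unfold_locales (rule inj_on_to_nat_on[OF countable_Q])

lemma c_swap23:
  assumes "a \<in> Q" "b \<in> Q" "d \<in> Q"
  shows "c a d b = - c a b d"
proof -
  have "c b d b = 0" "c a b b = 0" using c_eq_0_iff assms by auto
  then show ?thesis using c_cocycle[rule_format, of a b d b] assms by simp
qed

lemma c_by_base_point:
  "x1 \<in> Q \<Longrightarrow> x2 \<in> Q \<Longrightarrow> x3 \<in> Q \<Longrightarrow> c x1 x2 x3 = c q0 x2 x3 - c q0 x1 x3 + c q0 x1 x2"
  using c_cocycle[rule_format, of q0 x1 x2 x3] q0_in_Q by simp

definition before :: "'a \<Rightarrow> 'a \<Rightarrow> bool" where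
  "before x y \<longleftrightarrow> x \<noteq> y \<and> (x = q0 \<or> (y \<noteq> q0 \<and> c q0 x y = 1))"

lemma before_irrefl: "\<not> before x x"
  by (simp add: before_def)

lemma before_total: "x \<in> Q \<Longrightarrow> y \<in> Q \<Longrightarrow> x \<noteq> y \<Longrightarrow> before x y \<or> before y x"
  unfolding before_def using c_swap23[of q0 x y] c_values c_eq_0_iff q0_in_Q by auto

lemma before_asym: "x \<in> Q \<Longrightarrow> y \<in> Q \<Longrightarrow> before x y \<Longrightarrow> \<not> before y x"
  unfolding before_def using c_swap23[of q0 x y] q0_in_Q by auto

lemma before_trans:
  assumes "x \<in> Q" "y \<in> Q" "z \<in> Q" "before x y" "before y z"
  shows "before x z"
proof -
  have "x \<noteq> z" using assms before_asym by blast
  moreover have "c q0 x z = 1" if "x \<noteq> q0"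
  proof -
    have "c q0 x y = 1" "c q0 y z = 1" using assms that by (auto simp: before_def)
    then have "c x y z + c q0 x z = 2" using c_by_base_point[of x y z] assms by simp
    then show ?thesis
      using c_values[rule_format, of x y z] c_values[rule_format, of q0 x z] assms q0_in_Q by auto
  qed
  ultimately show ?thesis using assms by (auto simp: before_def)
qed

definition order_sign :: "'a \<Rightarrow> 'a \<Rightarrow> real" where
  "order_sign x y = (if x = y then 0 else if before x y then 1 else -1)"

lemma order_sign_swap: "x \<in> Q \<Longrightarrow> y \<in> Q \<Longrightarrow> order_sign y x = - order_sign x y"
  unfolding order_sign_def using before_total before_asym by fastforce

lemma c_eq_order_sign_product:
  assumes "x1 \<in> Q" "x2 \<in> Q" "x3 \<in> Q"
  shows "of_int (c x1 x2 x3) = order_sign x1 x2 * order_sign x2 x3 * order_sign x1 x3"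
proof (cases "x1 = x2 \<or> x2 = x3 \<or> x1 = x3")
  case True
  then show ?thesis using c_eq_0_iff assms by (auto simp: order_sign_def)
next
  case False
  have unit: "c q0 x y = 1 \<or> c q0 x y = -1"
    if "x \<in> Q" "y \<in> Q" "x \<noteq> y" "x \<noteq> q0" "y \<noteq> q0" for x y
    using that c_values[rule_format, of q0 x y] c_eq_0_iff[rule_format, of q0 x y] q0_in_Q by auto
  have sign: "order_sign x y = (if x = q0 then 1 else if y = q0 then -1 else of_int (c q0 x y))"
    if "x \<in> Q" "y \<in> Q" "x \<noteq> y" for x y
    using that unit[OF that] by (auto simp: order_sign_def before_def)
  have "c q0 q0 x = 0" "c q0 x q0 = 0" if "x \<in> Q" for x
    using that c_eq_0_iff q0_in_Q by auto
  then show ?thesis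
    using c_by_base_point[OF assms] sign[of x1 x2] sign[of x2 x3] sign[of x1 x3]
      unit[of x1 x2] unit[of x2 x3] unit[of x1 x3] c_values[rule_format, OF assms] assms False
    by (cases "x1 = q0"; cases "x2 = q0"; cases "x3 = q0") auto
qed

text \<open>Each x \<in> Q is blown up to the interval [offset x, offset x + width x) of [0,1),
  whose length is proportional to the mass of x; the intervals are laid out in the
  linear order cut at q0.\<close>

definition total_mass :: real where
  "total_mass = mass Q"

definition width :: "'a \<Rightarrow> real" where
  "width x = (1/2)^Suc (to_nat_on Q x) / total_mass"

definition offset :: "'a \<Rightarrow> real" where
  "offset x = mass {y\<in>Q. before y x} / total_mass"

definition blowup :: "'a \<Rightarrow> real \<Rightarrow> real" where
  "blowup x t = offset x + t * width x"

lemma total_mass_pos: "0 < total_mass"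
  unfolding total_mass_def using mass_pos q0_in_Q by blast

lemma width_pos: "0 < width x"
  using total_mass_pos by (simp add: width_def)

lemma offset_nonneg: "0 \<le> offset x"
  using total_mass_pos mass_nonneg by (simp add: offset_def)

lemma mass_insert_before:
  assumes "x \<in> Q"
  shows "mass (insert x {y\<in>Q. before y x}) = (offset x + width x) * total_mass"
proof -
  have "mass (insert x {y\<in>Q. before y x}) = mass {y\<in>Q. before y x} + (1/2)^Suc (to_nat_on Q x)"
    using mass_Un_disjoint[of "{y\<in>Q. before y x}" "{x}"] mass_singleton[of x] assms before_irrefl
    by auto
  then show ?thesis using total_mass_pos by (simp add: offset_def width_def field_simps)
qed

lemma offset_add_width_le_mass:
  assumes "x \<in> S" "S \<subseteq> Q" "{y\<in>Q. before y x} \<subseteq> S"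
  shows "offset x + width x \<le> mass S / total_mass"
proof -
  have "(offset x + width x) * total_mass \<le> mass S"
    using mass_insert_before[of x] mass_mono[of "insert x {y\<in>Q. before y x}" S] assms by auto
  then show ?thesis using total_mass_pos by (simp add: pos_le_divide_eq)
qed

lemma offset_add_width_le_offset:
  assumes "x \<in> Q" "y \<in> Q" "before x y"
  shows "offset x + width x \<le> offset y"
proof -
  have "{z\<in>Q. before z x} \<subseteq> {z\<in>Q. before z y}" using before_trans assms by blast
  then show ?thesis
    using offset_add_width_le_mass[of x "{z\<in>Q. before z y}"] assms by (simp add: offset_def)
qed

lemma offset_add_width_le_1: "x \<in> Q \<Longrightarrow> offset x + width x \<le> 1"
  using offset_add_width_le_mass[of x Q] total_mass_pos by (simp add: total_mass_def)

lemma offset_less: "x \<in> Q \<Longrightarrow> y \<in> Q \<Longrightarrow> before x y \<Longrightarrow> offset x < offset y"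
  using offset_add_width_le_offset[of x y] width_pos[of x] by simp

lemma blowup_bounds: "t \<in> {0..<1} \<Longrightarrow> offset x \<le> blowup x t \<and> blowup x t < offset x + width x"
  using width_pos[of x] by (simp add: blowup_def)

lemma blowup_range: "x \<in> Q \<Longrightarrow> t \<in> {0..<1} \<Longrightarrow> blowup x t \<in> {0..<1}"
  using blowup_bounds[of t x] offset_add_width_le_1[of x] offset_nonneg[of x] by auto

lemma blowup_less:
  "x \<in> Q \<Longrightarrow> y \<in> Q \<Longrightarrow> t \<in> {0..<1} \<Longrightarrow> s \<in> {0..<1} \<Longrightarrow> before x y \<Longrightarrow> blowup x t < blowup y s"
  using offset_add_width_le_offset[of x y] blowup_bounds[of t x] blowup_bounds[of s y] by linarith

lemma sgn_blowup_diff: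
  assumes "x \<in> Q" "y \<in> Q" "t \<in> {0..<1}" "s \<in> {0..<1}"
  shows "sgn (blowup y s - blowup x t) = (if x = y then sgn (s - t) else order_sign x y)"
proof (cases "x = y")
  case True
  then have "blowup y s - blowup x t = (s - t) * width x" by (simp add: blowup_def algebra_simps)
  then show ?thesis using True width_pos[of x] by (simp add: sgn_mult)
next
  case False
  then consider "before x y" | "before y x" using before_total assms by blast
  then show ?thesis
  proof cases
    case 1
    then show ?thesis using blowup_less[OF assms 1] False by (simp add: order_sign_def)
  next
    case 2
    then have "\<not> before x y" using before_asym assms by blast
    then show ?thesis using blowup_less[OF assms(2,1,4,3) 2] False by (simp add: order_sign_def)
  qed
qed

lemma blowup_eq_iff:
  assumes "x \<in> Q" "y \<in> Q" "t \<in> {0..<1}" "s \<in> {0..<1}"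
  shows "blowup x t = blowup y s \<longleftrightarrow> x = y \<and> t = s"
proof
  assume "blowup x t = blowup y s"
  then have "(if x = y then sgn (s - t) else order_sign x y) = 0"
    using sgn_blowup_diff[OF assms] by simp
  then show "x = y \<and> t = s" by (auto simp: order_sign_def sgn_if split: if_splits)
qed simp

text \<open>Unlike the blow-up itself, the cyclic orientation of three blown-up points
  does not depend on the base point q0.\<close>

definition lifted_sign :: "'a \<Rightarrow> real \<Rightarrow> 'a \<Rightarrow> real \<Rightarrow> 'a \<Rightarrow> real \<Rightarrow> real" where
  "lifted_sign x1 t1 x2 t2 x3 t3 =
    (if x1 = x2 \<and> x2 = x3 then cyclic_sign t1 t2 t3
     else if x1 = x2 then sgn (t2 - t1) else if x2 = x3 then sgn (t3 - t2)
     else if x1 = x3 then - sgn (t3 - t1) else of_int (c x1 x2 x3))"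

lemma cyclic_sign_blowup:
  assumes "x1 \<in> Q" "x2 \<in> Q" "x3 \<in> Q" "t1 \<in> {0..<1}" "t2 \<in> {0..<1}" "t3 \<in> {0..<1}"
  shows "cyclic_sign (blowup x1 t1) (blowup x2 t2) (blowup x3 t3) = lifted_sign x1 t1 x2 t2 x3 t3"
proof -
  have "cyclic_sign (blowup x1 t1) (blowup x2 t2) (blowup x3 t3) =
      (if x1 = x2 then sgn (t2 - t1) else order_sign x1 x2)
      * (if x2 = x3 then sgn (t3 - t2) else order_sign x2 x3)
      * (if x1 = x3 then sgn (t3 - t1) else order_sign x1 x3)"
    unfolding cyclic_sign_def using sgn_blowup_diff assms by presburger
  also have "\<dots> = lifted_sign x1 t1 x2 t2 x3 t3"
  proof -
    have "order_sign x y * order_sign x y = 1" if "x \<noteq> y" for x y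
      using that by (simp add: order_sign_def)
    then show ?thesis
      unfolding lifted_sign_def
      using order_sign_swap[of x1 x2] c_eq_order_sign_product[of x1 x2 x3] assms
      by (auto simp: cyclic_sign_def mult.assoc)
  qed
  finally show ?thesis .
qed

definition blownup :: "real set" where
  "blownup = (\<lambda>(x, t). blowup x t) ` (Q \<times> {0..<1})"

lemma blowup_in_blownup: "x \<in> Q \<Longrightarrow> t \<in> {0..<1} \<Longrightarrow> blowup x t \<in> blownup"
  unfolding blownup_def by force

lemma blownupE:
  assumes "u \<in> blownup"
  obtains x t where "x \<in> Q" "t \<in> {0..<1}" "u = blowup x t"
proof -
  obtain p where "p \<in> Q \<times> {0..<1}" "u = (\<lambda>(x, t). blowup x t) p"
    using assms unfolding blownup_def by blast
  then show thesis using that by (cases p) auto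
qed

lemma blownup_subset: "blownup \<subseteq> {0..<1}"
  using blowup_range by (auto simp: blownup_def)

lemma zero_in_blownup: "0 \<in> blownup"
proof -
  have none_before: "{y\<in>Q. before y q0} = {}" by (auto simp: before_def)
  have "blowup q0 0 = 0" unfolding blowup_def offset_def none_before by simp
  then show ?thesis using blowup_in_blownup[OF q0_in_Q, of 0] by simp
qed

lemma blowup_between:
  assumes "x \<in> Q" "a < b" "a < offset x + width x" "offset x < b"
  obtains t where "t \<in> {0..<1}" "a < blowup x t" "blowup x t < b"
proof (cases "a < offset x")
  case True
  then show thesis using that[of 0] assms by (simp add: blowup_def)
next
  case False
  define m where "m = min b (offset x + width x)"
  define t where "t = ((a + m)/2 - offset x) / width x"
  have "a < m" using assms by (simp add: m_def)
  then have "t \<in> {0..<1}"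
    using False width_pos[of x] by (auto simp: t_def m_def divide_less_eq field_simps)
  moreover have "blowup x t = (a + m)/2" using width_pos[of x] by (simp add: blowup_def t_def)
  moreover have "m \<le> b" by (simp add: m_def)
  then have "a < (a + m)/2 \<and> (a + m)/2 < b" using \<open>a < m\<close> by (simp add: field_simps)
  ultimately show thesis using that by simp
qed

lemma finite_has_before_greatest:
  assumes "finite F" "F \<noteq> {}" "F \<subseteq> Q"
  obtains m where "m \<in> F" "\<And>y. y \<in> F \<Longrightarrow> y \<noteq> m \<Longrightarrow> before y m"
proof -
  obtain m where "m \<in> F" "\<And>y. y \<in> F \<Longrightarrow> \<not> offset m < offset y"
    using ex_is_arg_min_if_finite[OF assms(1,2), of "\<lambda>x. - offset x"] by (auto simp: is_arg_min_def)
  then show thesis using that offset_less before_total assms(3) by blast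
qed

lemma finite_has_before_least:
  assumes "finite F" "F \<noteq> {}" "F \<subseteq> Q"
  obtains m where "m \<in> F" "\<And>y. y \<in> F \<Longrightarrow> y \<noteq> m \<Longrightarrow> before m y"
proof -
  obtain m where "m \<in> F" "\<And>y. y \<in> F \<Longrightarrow> \<not> offset y < offset m"
    using ex_is_arg_min_if_finite[OF assms(1,2), of offset] by (auto simp: is_arg_min_def)
  then show thesis using that offset_less before_total assms(3) by blast
qed

lemma mass_le_of_blowups_le:
  assumes "S \<subseteq> Q" "0 \<le> a" "\<And>x. x \<in> S \<Longrightarrow> offset x + width x \<le> a"
  shows "mass S \<le> a * total_mass"
proof (rule mass_le_of_index_less[OF assms(1)])
  fix M
  define F where "F = {x\<in>S. to_nat_on Q x < M}"
  show "mass F \<le> a * total_mass"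
  proof (cases "F = {}")
    case False
    obtain m where m: "m \<in> F" "\<And>y. y \<in> F \<Longrightarrow> y \<noteq> m \<Longrightarrow> before y m"
      using finite_has_before_greatest[OF _ False] finite_index_less[OF assms(1)] assms(1)
      unfolding F_def by blast
    have "m \<in> S" using m(1) by (simp add: F_def)
    have "F \<subseteq> insert m {y\<in>Q. before y m}" using m assms(1) by (auto simp: F_def)
    then have "mass F \<le> mass (insert m {y\<in>Q. before y m})" by (rule mass_mono)
    also have "\<dots> = (offset m + width m) * total_mass"
      using mass_insert_before \<open>m \<in> S\<close> assms(1) by blast
    also have "\<dots> \<le> a * total_mass"
      using assms(3)[OF \<open>m \<in> S\<close>] total_mass_pos by (simp add: mult_right_mono)
    finally show ?thesis .
  qed (use assms(2) total_mass_pos in simp)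
qed

lemma exists_before_index_ge:
  assumes "S \<subseteq> Q" "S \<noteq> {}"
  obtains m where "m \<in> S" "\<And>y. y \<in> S \<Longrightarrow> before y m \<Longrightarrow> N \<le> to_nat_on Q y"
proof (cases "{x\<in>S. to_nat_on Q x < N} = {}")
  case True
  then show thesis using that assms(2) by force
next
  case False
  obtain m where m: "m \<in> {x\<in>S. to_nat_on Q x < N}"
    "\<And>y. y \<in> {x\<in>S. to_nat_on Q x < N} \<Longrightarrow> y \<noteq> m \<Longrightarrow> before m y"
    using finite_has_before_least[OF finite_index_less[OF assms(1)] False] assms(1) by blast
  have "N \<le> to_nat_on Q y" if "y \<in> S" "before y m" for y
  proof (rule ccontr)
    assume "\<not> N \<le> to_nat_on Q y"
    then have "before m y" using m(2)[of y] that before_irrefl by auto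
    then show False using before_asym[of y m] that m(1) assms(1) by auto
  qed
  then show thesis using that m(1) by blast
qed

lemma offset_ge_of_gap:
  assumes gap: "\<And>d. d \<in> blownup \<Longrightarrow> \<not> (a < d \<and> d < b)"
    and "a < b" "x \<in> Q" "a < offset x + width x"
  shows "b \<le> offset x"
proof (rule ccontr)
  assume "\<not> b \<le> offset x"
  with assms have "x \<in> Q" "a < b" "a < offset x + width x" "offset x < b" by auto
  then obtain t where "t \<in> {0..<1}" "a < blowup x t" "blowup x t < b" by (rule blowup_between)
  then show False using gap blowup_in_blownup[OF \<open>x \<in> Q\<close>] by blast
qed

text \<open>If an interval (a,b) missed every blown-up point, the points of Q whose intervals
  end beyond a would all start beyond b; the first of them, up to points of small mass,
  would then have offset below b.\<close>

lemma dense_in_unit_blownup: "dense_in_unit blownup"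
  unfolding dense_in_unit_def
proof (intro allI impI)
  fix a b :: real assume ab: "0 \<le> a \<and> a < b \<and> b \<le> 1"
  show "\<exists>d\<in>blownup. a < d \<and> d < b"
  proof (rule ccontr)
    assume gap: "\<not> (\<exists>d\<in>blownup. a < d \<and> d < b)"
    define L where "L = {x\<in>Q. offset x + width x \<le> a}"
    define R where "R = Q - L"
    have R_beyond: "b \<le> offset x" if "x \<in> R" for x
      using that gap ab by (intro offset_ge_of_gap) (auto simp: R_def L_def)
    have mass_L: "mass L \<le> a * total_mass"
      using ab by (intro mass_le_of_blowups_le) (auto simp: L_def)
    have "R \<noteq> {}"
    proof
      assume "R = {}"
      then have "L = Q" by (auto simp: R_def L_def)
      then have "total_mass \<le> a * total_mass" using mass_L by (simp add: total_mass_def)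
      then show False using ab total_mass_pos by simp
    qed
    obtain N where N: "(1/2::real)^N < (b - a) * total_mass"
      using real_arch_pow_inv[of "(b - a) * total_mass" "1/2"] ab total_mass_pos by auto
    obtain m where m: "m \<in> R" "\<And>y. y \<in> R \<Longrightarrow> before y m \<Longrightarrow> N \<le> to_nat_on Q y"
      using exists_before_index_ge[of R] \<open>R \<noteq> {}\<close> by (auto simp: R_def)
    define RM where "RM = {y\<in>R. before y m}"
    have "offset m * total_mass = mass {y\<in>Q. before y m}"
      using total_mass_pos by (simp add: offset_def)
    also have "\<dots> \<le> mass (L \<union> RM)" by (intro mass_mono) (auto simp: RM_def R_def)
    also have "\<dots> = mass L + mass RM" by (intro mass_Un_disjoint) (auto simp: RM_def R_def L_def)
    also have "\<dots> \<le> a * total_mass + (1/2)^N"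
      using mass_L mass_le_of_index_ge[of RM N] m(2) by (force simp: RM_def)
    also have "\<dots> < b * total_mass" using N by (simp add: algebra_simps)
    finally have "offset m < b" using total_mass_pos by simp
    then show False using R_beyond[OF m(1)] by simp
  qed
qed

section \<open>Extending automorphisms of the circular order\<close>

definition order_automorphism :: "('a \<Rightarrow> 'a) \<Rightarrow> bool" where
  "order_automorphism g \<longleftrightarrow> bij_betw g Q Q \<and>
     (\<forall>x1\<in>Q. \<forall>x2\<in>Q. \<forall>x3\<in>Q. c (g x1) (g x2) (g x3) = c x1 x2 x3)"

definition induced :: "('a \<Rightarrow> 'a) \<Rightarrow> real \<Rightarrow> real" where
  "induced g u = (let (x, t) = inv_into (Q \<times> {0..<1}) (\<lambda>(x, t). blowup x t) u in blowup (g x) t)"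

lemma induced_blowup:
  assumes "x \<in> Q" "t \<in> {0..<1}"
  shows "induced g (blowup x t) = blowup (g x) t"
proof -
  have "inj_on (\<lambda>(x, t). blowup x t) (Q \<times> {0..<1})"
    by (rule inj_onI) (auto simp: blowup_eq_iff)
  from inv_into_f_f[OF this, of "(x, t)"] assms
  have "inv_into (Q \<times> {0..<1}) (\<lambda>(x, t). blowup x t) (blowup x t) = (x, t)" by simp
  then show ?thesis by (simp add: induced_def)
qed

lemma bij_betw_induced:
  assumes "bij_betw g Q Q"
  shows "bij_betw (induced g) blownup blownup"
proof (rule bij_betw_byWitness[of _ "induced (inv_into Q g)"])
  have g: "g x \<in> Q" "inv_into Q g x \<in> Q" "inv_into Q g (g x) = x" "g (inv_into Q g x) = x"
    if "x \<in> Q" for x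
    using assms that by (auto simp: bij_betw_def inv_into_into bij_betw_inv_into_left bij_betw_inv_into_right)
  show "\<forall>u\<in>blownup. induced (inv_into Q g) (induced g u) = u"
    "\<forall>u\<in>blownup. induced g (induced (inv_into Q g) u) = u"
    "induced g ` blownup \<subseteq> blownup" "induced (inv_into Q g) ` blownup \<subseteq> blownup"
    by (auto elim!: blownupE simp: induced_blowup g blowup_in_blownup simp del: atLeastLessThan_iff)
qed

lemma cyclic_preserving_induced:
  assumes "order_automorphism g"
  shows "cyclic_preserving (induced g) blownup"
  unfolding cyclic_preserving_def
proof (intro ballI)
  have g: "g x \<in> Q" "g x = g y \<longleftrightarrow> x = y" if "x \<in> Q" "y \<in> Q" for x y
    using assms that by (auto simp: order_automorphism_def bij_betw_def inj_on_eq_iff)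
  fix u1 u2 u3 assume "u1 \<in> blownup" "u2 \<in> blownup" "u3 \<in> blownup"
  then obtain x1 t1 x2 t2 x3 t3 where x: "x1 \<in> Q" "x2 \<in> Q" "x3 \<in> Q"
    and t: "t1 \<in> {0..<1}" "t2 \<in> {0..<1}" "t3 \<in> {0..<1}"
    and u: "u1 = blowup x1 t1" "u2 = blowup x2 t2" "u3 = blowup x3 t3"
    by (elim blownupE) blast
  have "cyclic_sign (induced g u1) (induced g u2) (induced g u3) = lifted_sign (g x1) t1 (g x2) t2 (g x3) t3"
    using x t g by (simp add: u induced_blowup cyclic_sign_blowup)
  also have "\<dots> = lifted_sign x1 t1 x2 t2 x3 t3"
    using x g assms by (simp add: lifted_sign_def order_automorphism_def)
  also have "\<dots> = cyclic_sign u1 u2 u3" using x t by (simp add: u cyclic_sign_blowup)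
  finally show "cyclic_sign (induced g u1) (induced g u2) (induced g u3) = cyclic_sign u1 u2 u3" .
qed

text \<open>The choice is only meaningful for order automorphisms g, for which such an f exists
  and is unique.\<close>

definition extension :: "('a \<Rightarrow> 'a) \<Rightarrow> real \<Rightarrow> real" where
  "extension g = (SOME f. bij_betw f {0..<1} {0..<1} \<and> cyclic_preserving f {0..<1} \<and>
     (\<forall>d\<in>blownup. f d = induced g d))"

lemma extension:
  assumes "order_automorphism g"
  shows "bij_betw (extension g) {0..<1} {0..<1}" "cyclic_preserving (extension g) {0..<1}"
    and "\<forall>d\<in>blownup. extension g d = induced g d"
proof -
  have "bij_betw g Q Q" using assms by (simp add: order_automorphism_def)
  obtain f where "bij_betw f {0..<1} {0..<1}" "cyclic_preserving f {0..<1}"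
    "\<And>d. d \<in> blownup \<Longrightarrow> f d = induced g d"
    using cyclic_extension_exists[OF blownup_subset zero_in_blownup dense_in_unit_blownup
        bij_betw_induced[OF \<open>bij_betw g Q Q\<close>] cyclic_preserving_induced[OF assms]] by blast
  then have "\<exists>f. bij_betw f {0..<1} {0..<1} \<and> cyclic_preserving f {0..<1} \<and>
      (\<forall>d\<in>blownup. f d = induced g d)" by blast
  from someI_ex[OF this] show "bij_betw (extension g) {0..<1} {0..<1}"
    "cyclic_preserving (extension g) {0..<1}" "\<forall>d\<in>blownup. extension g d = induced g d"
    unfolding extension_def by blast+
qed

lemma extension_blowup:
  "order_automorphism g \<Longrightarrow> x \<in> Q \<Longrightarrow> t \<in> {0..<1} \<Longrightarrow> extension g (blowup x t) = blowup (g x) t"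
  using extension(3) blowup_in_blownup induced_blowup by simp

lemma extension_range: "order_automorphism g \<Longrightarrow> extension g ` {0..<1} \<subseteq> {0..<1}"
  using extension(1) by (simp add: bij_betw_def)

lemma extension_cong:
  assumes "\<And>x. x \<in> Q \<Longrightarrow> g x = h x"
  shows "extension g = extension h"
proof -
  have "\<forall>d\<in>blownup. induced g d = induced h d"
    using assms by (auto elim!: blownupE simp: induced_blowup simp del: atLeastLessThan_iff)
  then show ?thesis unfolding extension_def by simp
qed

lemma order_automorphism_comp:
  assumes "order_automorphism g" "order_automorphism h"
  shows "order_automorphism (g \<circ> h)"
proof -
  have "bij_betw g Q Q" "bij_betw h Q Q" using assms by (simp_all add: order_automorphism_def)
  then show ?thesis
    using assms bij_betw_trans[of h Q Q g Q] by (simp add: order_automorphism_def bij_betw_apply)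
qed

lemma extension_image: "order_automorphism g \<Longrightarrow> extension g ` blownup = blownup"
  using extension(3) bij_betw_induced[of g]
  by (simp add: order_automorphism_def bij_betw_def cong: image_cong)

lemma extension_comp:
  assumes g: "order_automorphism g" and h: "order_automorphism h" and u: "u \<in> {0..<1}"
  shows "extension (g \<circ> h) u = extension g (extension h u)"
proof -
  have gh: "order_automorphism (g \<circ> h)" by (rule order_automorphism_comp[OF g h])
  have "bij_betw (extension g \<circ> extension h) {0..<1} {0..<1}"
    by (rule bij_betw_trans[OF extension(1)[OF h] extension(1)[OF g]])
  moreover have "cyclic_preserving (extension g \<circ> extension h) {0..<1}"
    by (rule cyclic_preserving_comp[OF extension(2)[OF g] extension(2)[OF h] extension_range[OF h]])
  moreover have "extension (g \<circ> h) d = (extension g \<circ> extension h) d" if "d \<in> blownup" for d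
    using that gh g h
    by (auto elim!: blownupE simp: extension_blowup order_automorphism_def bij_betw_apply
        simp del: atLeastLessThan_iff)
  ultimately have "extension (g \<circ> h) u = (extension g \<circ> extension h) u"
    using cyclic_extension_unique[OF blownup_subset dense_in_unit_blownup extension(1,2)[OF gh]
        extension_image[OF gh]] u by blast
  then show ?thesis by simp
qed

text \<open>Extensions are unique, hence compose like the automorphisms they extend.\<close>

lemma circle_map_extension_conj:
  assumes g: "order_automorphism g" and h: "order_automorphism h" and k: "order_automorphism k"
    and conj: "\<And>x. x \<in> Q \<Longrightarrow> g (h x) = k (g x)"
  shows "circle_map (extension k) =
    circle_map (extension g) \<circ> circle_map (extension h) \<circ> hinv (circle_map (extension g))"
proof -
  let ?g' = "inv_into {0..<1} (extension g)"
  have "extension k v = (extension g \<circ> extension h \<circ> ?g') v" if v: "v \<in> {0..<1}" for v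
  proof -
    have "?g' v \<in> {0..<1}" "extension g (?g' v) = v"
      using bij_betw_apply[OF bij_betw_inv_into[OF extension(1)[OF g]] v]
        bij_betw_inv_into_right[OF extension(1)[OF g] v] by simp_all
    moreover have "extension (k \<circ> g) = extension (g \<circ> h)"
      using conj by (intro extension_cong) simp
    ultimately show ?thesis
      using extension_comp[OF k g] extension_comp[OF g h] by (metis comp_apply)
  qed
  then have "circle_map (extension k) = circle_map (extension g \<circ> extension h \<circ> ?g')"
    by (rule circle_map_cong)
  also have "\<dots> = circle_map (extension g) \<circ> circle_map (extension h) \<circ> circle_map ?g'"
    using extension_range[OF h] bij_betw_inv_into[OF extension(1)[OF g]]
    by (simp add: circle_map_comp bij_betw_def image_comp)
  finally show ?thesis using hinv_circle_map[OF extension(1)[OF g]] by simp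
qed

lemma circle_map_extension_inj:
  assumes "order_automorphism g" "order_automorphism h"
    and "circle_map (extension g) = circle_map (extension h)" "x \<in> Q"
  shows "g x = h x"
proof -
  have "extension g (blowup x 0) = extension h (blowup x 0)"
    using circle_map_eqD[OF assms(3) extension_range[OF assms(1)] extension_range[OF assms(2)]]
      blowup_range[OF assms(4)] by simp
  then have "blowup (g x) 0 = blowup (h x) 0" using assms by (simp add: extension_blowup)
  moreover have "g x \<in> Q" "h x \<in> Q" using assms by (auto simp: order_automorphism_def bij_betw_apply)
  ultimately show ?thesis by (simp add: blowup_eq_iff)
qed

end

section \<open>The representation of the quandle\<close>

lemma quandle_bij_betw_right:
  assumes "quandle Q op" "s \<in> Q"
  shows "bij_betw (\<lambda>x. op x s) Q Q"
proof -
  have closed: "\<forall>q\<in>Q. \<forall>r\<in>Q. op q r \<in> Q"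
    and division: "\<forall>q\<in>Q. \<forall>s\<in>Q. \<exists>!r. r \<in> Q \<and> op r s = q"
    using assms(1) by (simp_all add: quandle_def)
  show ?thesis
    unfolding bij_betw_def
  proof
    show "inj_on (\<lambda>x. op x s) Q"
    proof (rule inj_onI)
      fix x y assume xy: "x \<in> Q" "y \<in> Q" "op x s = op y s"
      note unique = division[rule_format, OF closed[rule_format, OF xy(1) assms(2)] assms(2)]
      show "x = y" using the1_equality[OF unique, of x] the1_equality[OF unique, of y] xy by simp
    qed
    have "q \<in> (\<lambda>x. op x s) ` Q" if "q \<in> Q" for q
      using ex1_implies_ex[OF division[rule_format, OF that assms(2)]] by blast
    moreover have "(\<lambda>x. op x s) ` Q \<subseteq> Q" using closed assms(2) by blast
    ultimately show "(\<lambda>x. op x s) ` Q = Q" by blast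
  qed
qed

lemma weak_latin_right_cancel:
  assumes "weak_latin Q op" "r \<in> Q" "s \<in> Q" "\<And>x. x \<in> Q \<Longrightarrow> op x r = op x s"
  shows "r = s"
  using assms unfolding weak_latin_def by blast

context pointed_circular_order
begin

lemma order_automorphism_right:
  assumes "quandle Q op" "circular_order Q op c" "s \<in> Q"
  shows "order_automorphism (\<lambda>x. op x s)"
proof -
  have "\<forall>x1\<in>Q. \<forall>x2\<in>Q. \<forall>x3\<in>Q. c (op x1 s) (op x2 s) (op x3 s) = c x1 x2 x3"
    using assms(2,3) unfolding circular_order_def by blast
  then show ?thesis
    using quandle_bij_betw_right[OF assms(1,3)] by (simp add: order_automorphism_def)
qed

lemma circle_map_extension_right_conj:
  assumes "quandle Q op" "circular_order Q op c" "r \<in> Q" "s \<in> Q"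
  shows "circle_map (extension (\<lambda>x. op x (op r s))) =
    circle_map (extension (\<lambda>x. op x s)) \<circ> circle_map (extension (\<lambda>x. op x r)) \<circ>
    hinv (circle_map (extension (\<lambda>x. op x s)))"
proof (rule circle_map_extension_conj)
  have closed: "\<forall>q\<in>Q. \<forall>r\<in>Q. op q r \<in> Q"
    and distrib: "\<forall>q\<in>Q. \<forall>r\<in>Q. \<forall>s\<in>Q. op (op q r) s = op (op q s) (op r s)"
    using assms(1) unfolding quandle_def by blast+
  have "op r s \<in> Q" using closed assms(3,4) by blast
  then show "order_automorphism (\<lambda>x. op x s)" "order_automorphism (\<lambda>x. op x r)"
    "order_automorphism (\<lambda>x. op x (op r s))"
    using order_automorphism_right[OF assms(1,2)] assms(3,4) by blast+
  show "op (op x r) s = op (op x s) (op r s)" if "x \<in> Q" for x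
    using distrib that assms(3,4) by blast
qed

lemma inj_on_circle_map_extension_right:
  assumes "quandle Q op" "weak_latin Q op" "circular_order Q op c"
  shows "inj_on (\<lambda>s. circle_map (extension (\<lambda>x. op x s))) Q"
proof (rule inj_onI)
  fix r s assume rs: "r \<in> Q" "s \<in> Q"
    and eq: "circle_map (extension (\<lambda>x. op x r)) = circle_map (extension (\<lambda>x. op x s))"
  have "order_automorphism (\<lambda>x. op x r)" "order_automorphism (\<lambda>x. op x s)"
    using order_automorphism_right[OF assms(1,3)] rs by blast+
  from circle_map_extension_inj[OF this eq] show "r = s"
    by (rule weak_latin_right_cancel[OF assms(2) rs])
qed

end

theorem lemma3p3:
  fixes Q :: "'a set" and op :: "'a \<Rightarrow> 'a \<Rightarrow> 'a" and c :: "'a \<Rightarrow> 'a \<Rightarrow> 'a \<Rightarrow> int"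
  assumes "countable Q"
    and "quandle Q op"
    and "weak_latin Q op"
    and "circular_order Q op c"
  shows "\<exists>\<rho> :: 'a \<Rightarrow> (complex \<Rightarrow> complex).
           (\<forall>q\<in>Q. homeo_plus (\<rho> q)) \<and> inj_on \<rho> Q \<and>
           (\<forall>r\<in>Q. \<forall>s\<in>Q. \<rho> (op r s) = \<rho> s \<circ> \<rho> r \<circ> hinv (\<rho> s))"
proof (cases "Q = {}")
  case False
  then obtain q0 where "q0 \<in> Q" by blast
  interpret pointed_circular_order Q c q0
    using assms(1,4) \<open>q0 \<in> Q\<close> unfolding pointed_circular_order_def circular_order_def by blast
  show ?thesis
  proof (intro exI[of _ "\<lambda>s. circle_map (extension (\<lambda>x. op x s))"] conjI ballI)
    fix q assume "q \<in> Q"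
    show "homeo_plus (circle_map (extension (\<lambda>x. op x q)))"
      using extension[OF order_automorphism_right[OF assms(2,4) \<open>q \<in> Q\<close>]]
      by (simp add: homeo_plus_circle_map)
  next
    show "inj_on (\<lambda>s. circle_map (extension (\<lambda>x. op x s))) Q"
      by (rule inj_on_circle_map_extension_right[OF assms(2-4)])
  next
    fix r s assume "r \<in> Q" "s \<in> Q"
    then show "circle_map (extension (\<lambda>x. op x (op r s))) =
      circle_map (extension (\<lambda>x. op x s)) \<circ> circle_map (extension (\<lambda>x. op x r)) \<circ>
      hinv (circle_map (extension (\<lambda>x. op x s)))"
      by (rule circle_map_extension_right_conj[OF assms(2,4)])
  qed
qed simp

end
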